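(* Let $p$ be a prime, $k\ge1$, $q=p^k$. Every integer of the form $$D=AB^{q-1},$$ where $A,B\in\mathbb Z$ satisfy $\gcd(A,q-1)=1$ and $B\equiv A\pmod q$, is an integer group determinant of $GA(1,q)$.
   Context: For a finite group $G=\{g_1,\dots,g_n\}$ and an element $\sum_{g\in G}a_g g$ of the group ring $\mathbb Z[G]$ (all $a_g\in\mathbb Z$), the group determinant is $D\left(\sum_{g\in G}a_g g\right)=\det\left(a_{g_ig_j^{-1}}\right)_{i,j=1}^n$. An integer group determinant of $G$ is any integer of this form. The general affine group of degree one over $\mathbb F_q$ is $GA(1,q)=\left\{\begin{pmatrix} a & b\\ 0 & 1\end{pmatrix}: a\in\mathbb F_q^*,\ b\in\mathbb F_q\right\}$ under matrix multiplication. *)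

theory Defs
  imports "HOL-Combinatorics.Permutations" "HOL-Number_Theory.Cong"
begin

text \<open>GA(1,q) over a finite field 'a: the matrix [[a,b],[0,1]] is represented
by the pair (a,b) with a nonzero.\<close>

definition GA1 :: "('a::field \<times> 'a) set" where
  "GA1 = {(a, b). a \<noteq> 0}"

text \<open>Matrix product [[a,b],[0,1]] [[c,d],[0,1]] = [[ac, ad+b],[0,1]].\<close>
definition ga_mult :: "'a::field \<times> 'a \<Rightarrow> 'a \<times> 'a \<Rightarrow> 'a \<times> 'a" where
  "ga_mult x y = (fst x * fst y, fst x * snd y + snd x)"

definition ga_inv :: "'a::field \<times> 'a \<Rightarrow> 'a \<times> 'a" where
  "ga_inv x = (inverse (fst x), - snd x / fst x)"

text \<open>Group determinant det(a_{g h^{-1}})_{g,h \<in> G}, written via the Leibniz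
formula over permutations of the (finite) index set G; this is independent of
the chosen enumeration of G.\<close>
definition group_det ::
  "'g set \<Rightarrow> ('g \<Rightarrow> 'g \<Rightarrow> 'g) \<Rightarrow> ('g \<Rightarrow> 'g) \<Rightarrow> ('g \<Rightarrow> int) \<Rightarrow> int" where
  "group_det G gm gi a =
     (\<Sum>\<sigma> | \<sigma> permutes G. sign \<sigma> * (\<Prod>g\<in>G. a (gm g (gi (\<sigma> g)))))"

end

(*
  Write an element of GA(1,q) as (u, u s) with u in F_q^* and s in F_q, and take as
  coefficients y + t (sum_a (a,0) - sum_a (a,a)) with y an integer function on the
  diagonal subgroup F_q^*. In these coordinates the group matrix is K + W, where K is
  block diagonal with q copies of the group matrix Y of the cyclic group F_q^* and the
  rows of W depend only on s. The rows of Y sum to e = sum y, so K (e I + W) = e (K + W),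
  and det (e I + W) = e^((q-1) q - q + 1) (e + t q)^(q-1) gives
  e^q D = (det Y)^q (e + t q)^(q-1) e. Hence if det Y = A and e = +-A, the choice
  t = +-(B - A)/q yields D = A B^(q-1).

  It remains to find y with det Y = A and sum y = +-A when A is coprime to q - 1. For
  r = |A| the element 1 + g + ... + g^(r-1), with g a generator of F_q^*, works up to sign:
  its group determinant D(r) satisfies D(r^m) = D(r)^m (via the automorphism x -> x^r)
  and D(r) = r for r = 1 mod (q - 1), so |D(r)|^phi(q-1) = r^phi(q-1). A wrong sign is
  repaired by negating y if q - 1 is odd, and by translating y by g, which permutes
  F_q^* in a (q-1)-cycle, if q - 1 is even.
*)
theory Submission
  imports Defs "HOL-Analysis.Determinants" "HOL-Combinatorics.Cycles" "HOL-Number_Theory.Residues"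
begin

section \<open>Determinant identities\<close>

lemma det_reindex_bij_betw:
  fixes f :: "'n::finite \<Rightarrow> 'g" and m :: "'g \<Rightarrow> 'g \<Rightarrow> 'r::comm_ring_1"
  assumes f: "bij_betw f UNIV S"
  shows "det (\<chi> i j. m (f i) (f j)) =
    (\<Sum>\<sigma> | \<sigma> permutes S. of_int (sign \<sigma>) * (\<Prod>g\<in>S. m g (\<sigma> g)))"
proof -
  let ?g = "inv_into UNIV f"
  have g: "bij_betw ?g S UNIV" using f bij_betw_inv_into by blast
  have injf: "inj f" using f by (simp add: bij_betw_def)
  show ?thesis unfolding det_def
  proof (rule sum.reindex_bij_witness[where i="map_permutation S ?g" and j="map_permutation UNIV f"])
    fix p assume "p \<in> {p. p permutes (UNIV::'n set)}"
    then have p: "p permutes UNIV" by simp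
    show "map_permutation S ?g (map_permutation UNIV f p) = p"
      by (rule map_permutation_compose_inv[OF f p]) (use injf in auto)
    show "map_permutation UNIV f p \<in> {\<sigma>. \<sigma> permutes S}"
      using map_permutation_permutes[OF f p] by simp
    have "(\<Prod>g\<in>S. m g (map_permutation UNIV f p g)) = (\<Prod>i\<in>UNIV. m (f i) (map_permutation UNIV f p (f i)))"
      using prod.reindex_bij_betw[OF f, of "\<lambda>g. m g (map_permutation UNIV f p g)"] by simp
    also have "\<dots> = (\<Prod>i\<in>UNIV. m (f i) (f (p i)))"
      by (intro prod.cong refl) (simp add: map_permutation_apply[OF injf])
    finally show "of_int (sign (map_permutation UNIV f p)) * (\<Prod>g\<in>S. m g (map_permutation UNIV f p g))
        = of_int (sign p) * (\<Prod>i\<in>UNIV. (\<chi> i j. m (f i) (f j)) $ i $ p i)"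
      using sign_map_permutation[of f UNIV p] injf p by simp
  next
    fix \<sigma> assume "\<sigma> \<in> {\<sigma>. \<sigma> permutes S}"
    then have s: "\<sigma> permutes S" by simp
    show "map_permutation UNIV f (map_permutation S ?g \<sigma>) = \<sigma>"
      by (rule map_permutation_compose_inv[OF g s]) (use f in \<open>auto simp: bij_betw_inv_into_right\<close>)
    show "map_permutation S ?g \<sigma> \<in> {p. p permutes UNIV}"
      using map_permutation_permutes[OF g s] by simp
  qed
qed

lemma det_diagonal_rows_outside:
  fixes A :: "'r::comm_ring_1^'n::finite^'n"
  assumes diag: "\<And>i j. i \<notin> R \<Longrightarrow> A$i$j = (if j = i then d i else 0)"
  shows "det A = (\<Prod>i\<in>-R. d i) * (\<Sum>\<sigma> | \<sigma> permutes R. of_int (sign \<sigma>) * (\<Prod>i\<in>R. A$i$\<sigma> i))"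
proof -
  let ?t = "\<lambda>p. of_int (sign p) * (\<Prod>i\<in>UNIV. A$i$p i)"
  have vanish: "?t p = 0" if "p permutes UNIV" "\<not> p permutes R" for p
  proof -
    have "\<not> (\<forall>i. i \<notin> R \<longrightarrow> p i = i)"
      using that by (auto simp: permutes_def)
    then obtain i where i: "i \<notin> R" "p i \<noteq> i" by blast
    then have "A$i$p i = 0" using diag by simp
    then have "(\<Prod>i\<in>UNIV. A$i$p i) = 0" by (intro prod_zero) auto
    then show "?t p = 0" by simp
  qed
  have "det A = (\<Sum>p | p permutes R. ?t p)"
    unfolding det_def using vanish permutes_subset[of _ R UNIV]
    by (intro sum.mono_neutral_right) (auto simp: finite_permutations)
  also have "\<dots> = (\<Sum>p | p permutes R. (\<Prod>i\<in>-R. d i) * (of_int (sign p) * (\<Prod>i\<in>R. A$i$p i)))"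
  proof (rule sum.cong[OF refl])
    fix p assume "p \<in> {p. p permutes R}"
    then have p: "p permutes R" by simp
    have "(\<Prod>i\<in>UNIV. A$i$p i) = (\<Prod>i\<in>R. A$i$p i) * (\<Prod>i\<in>-R. A$i$p i)"
      using prod.union_disjoint[of R "-R" "\<lambda>i. A$i$p i"] by (simp add: Compl_partition)
    also have "(\<Prod>i\<in>-R. A$i$p i) = (\<Prod>i\<in>-R. d i)"
      by (intro prod.cong refl) (simp add: diag permutes_not_in[OF p])
    finally show "?t p = (\<Prod>i\<in>-R. d i) * (of_int (sign p) * (\<Prod>i\<in>R. A$i$p i))"
      by (simp add: algebra_simps)
  qed
  finally show ?thesis by (simp add: sum_distrib_left)
qed

lemma det_diagonal_rows_outside_reindex:
  fixes A :: "'r::comm_ring_1^'n::finite^'n" and rep :: "'b::finite \<Rightarrow> 'n"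
  assumes "\<And>i j. i \<notin> R \<Longrightarrow> A$i$j = (if j = i then d i else 0)"
    and "bij_betw rep UNIV R"
  shows "det A = (\<Prod>i\<in>-R. d i) * det (\<chi> s s'. A $ rep s $ rep s')"
  using det_diagonal_rows_outside[OF assms(1)] det_reindex_bij_betw[OF assms(2), of "\<lambda>i j. A$i$j"]
  by simp

lemma det_unitriangular_block:
  fixes A :: "'r::comm_ring_1^'n::finite^'n"
  assumes rows: "\<And>i j. i \<in> R \<Longrightarrow> A$i$j = (if j = i then 1 else 0)"
    and block: "\<And>i j. i \<notin> R \<Longrightarrow> j \<notin> R \<Longrightarrow> A$i$j = (if j = i then 1 else 0)"
  shows "det A = 1"
proof -
  have "(\<Prod>i\<in>-R. A$i$\<sigma> i) = (\<Prod>i\<in>-R. (mat 1 :: 'r^'n^'n)$i$\<sigma> i)" if "\<sigma> permutes -R" for \<sigma>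
    using block permutes_in_image[OF that] by (intro prod.cong) (auto simp: mat_def)
  moreover have "det A = (\<Sum>\<sigma> | \<sigma> permutes -R. of_int (sign \<sigma>) * (\<Prod>i\<in>-R. A$i$\<sigma> i))"
    using det_diagonal_rows_outside[of "-R" A "\<lambda>_. 1"] rows by simp
  moreover have "det (mat 1 :: 'r^'n^'n) =
      (\<Sum>\<sigma> | \<sigma> permutes -R. of_int (sign \<sigma>) * (\<Prod>i\<in>-R. (mat 1 :: 'r^'n^'n)$i$\<sigma> i))"
    using det_diagonal_rows_outside[of "-R" "mat 1 :: 'r^'n^'n" "\<lambda>_. 1"] by (simp add: mat_def)
  ultimately show ?thesis
    by (metis (no_types, lifting) det_I mem_Collect_eq sum.cong)
qed

lemma det_permute_rows_columns:
  fixes A :: "'r::comm_ring_1^'n::finite^'n"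
  assumes p: "p permutes UNIV"
  shows "det (\<chi> i j. A$p i$p j) = det A"
proof -
  have "det (\<chi> i j. A$p i$p j) = of_int (sign p) * (of_int (sign p) * det A)"
    using det_permute_columns[OF p, of "\<chi> i. A $ p i"] det_permute_rows[OF p, of A] by simp
  also have "\<dots> = of_int (sign p) * of_int (sign p) * det A"
    by (simp only: mult.assoc)
  also have "of_int (sign p) * of_int (sign p) = (1::'r)"
    by (metis of_int_1 of_int_mult sign_idempotent)
  finally show ?thesis
    by simp
qed

lemma sign_cycle_of_list:
  assumes "distinct cs" and "cs \<noteq> []"
  shows "sign (cycle_of_list cs) = (-1) ^ (length cs - 1)"
  using assms
proof (induction cs rule: cycle_of_list.induct)
  case (1 i j cs)
  have "sign (cycle_of_list (i # j # cs)) = sign (Transposition.transpose i j \<circ> cycle_of_list (j # cs))"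
    by (simp only: cycle_of_list.simps)
  also have "\<dots> = sign (Transposition.transpose i j) * sign (cycle_of_list (j # cs))"
    by (rule sign_compose[OF permutation_swap_id permutation_of_cycle])
  also have "\<dots> = (-1) * (-1) ^ (length (j # cs) - 1)"
    using 1 by (simp add: sign_swap_id)
  finally show ?case
    by (simp del: cycle_of_list.simps)
qed auto

text \<open>Below, \<open>r\<close> is idempotent and its fixed points serve as representatives of its fibres.\<close>

lemma det_subtract_representative_rows:
  fixes K :: "'r::comm_ring_1^'n::finite^'n"
  assumes r: "\<And>i. r (r i) = r i"
  shows "det (\<chi> i j. K$i$j - (if r i \<noteq> i then K$(r i)$j else 0)) = det K"
proof -
  define P :: "'r^'n^'n" where
    "P = (\<chi> i k. (if k = i then 1 else 0) - (if r i \<noteq> i \<and> k = r i then 1 else 0))"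
  have "(P ** K) $ i $ j = K$i$j - (if r i \<noteq> i then K$(r i)$j else 0)" for i j
  proof -
    have "(P ** K) $ i $ j =
        (\<Sum>k\<in>UNIV. (if k = i then K$k$j else 0) - (if k = r i then (if r i \<noteq> i then K$k$j else 0) else 0))"
      unfolding P_def matrix_matrix_mult_def by simp (intro sum.cong; auto)
    then show ?thesis by (simp add: sum_subtractf)
  qed
  moreover have "det P = 1"
    by (rule det_unitriangular_block[where R="{i. r i = i}"]) (auto simp: P_def r)
  ultimately show ?thesis
    by (metis (no_types, lifting) det_mul mult_1 vec_lambda_unique)
qed

lemma det_add_representative_columns:
  fixes M :: "'r::comm_ring_1^'n::finite^'n"
  assumes r: "\<And>i. r (r i) = r i"
  shows "det (\<chi> i j. M$i$j + (\<Sum>k | r k \<noteq> k \<and> r k = j. M$i$k)) = det M"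
proof -
  define Q :: "'r^'n^'n" where
    "Q = (\<chi> k j. (if j = k then 1 else 0) + (if r k \<noteq> k \<and> j = r k then 1 else 0))"
  have "(M ** Q) $ i $ j = M$i$j + (\<Sum>k | r k \<noteq> k \<and> r k = j. M$i$k)" for i j
  proof -
    have "(M ** Q) $ i $ j =
        (\<Sum>k\<in>UNIV. (if j = k then M$i$k else 0) + (if r k \<noteq> k \<and> r k = j then M$i$k else 0))"
      unfolding Q_def matrix_matrix_mult_def by simp (intro sum.cong; auto)
    then show ?thesis by (simp add: sum.distrib sum.inter_filter[symmetric])
  qed
  moreover have "det Q = 1"
    by (rule det_unitriangular_block[where R="{i. r i = i}"]) (auto simp: Q_def r)
  ultimately show ?thesis
    by (metis (no_types, lifting) det_mul mult.comm_neutral vec_lambda_unique)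
qed

text \<open>If every row outside the representatives differs from the row of its representative
  by \<open>e\<close> times the difference of two unit vectors, the two operations above turn all
  these rows into \<open>e\<close> times unit rows.\<close>

lemma det_fold_representatives:
  fixes K :: "'r::comm_ring_1^'n::finite^'n"
  assumes r: "\<And>i. r (r i) = r i"
    and rows: "\<And>i j. r i \<noteq> i \<Longrightarrow>
      K$i$j - K$(r i)$j = e * ((if j = i then 1 else 0) - (if j = r i then 1 else 0))"
  shows "det K = e ^ card {i. r i \<noteq> i} *
    (\<Sum>\<sigma> | \<sigma> permutes {i. r i = i}.
       of_int (sign \<sigma>) * (\<Prod>i | r i = i. \<Sum>k | r k = \<sigma> i. K$i$k))"
proof -
  let ?R = "{i. r i = i}"
  define L where "L = (\<chi> i j. K$i$j - (if r i \<noteq> i then K$(r i)$j else 0))"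
  define N where "N = (\<chi> i j. L$i$j + (\<Sum>k | r k \<noteq> k \<and> r k = j. L$i$k))"
  have "det N = det L"
    unfolding N_def by (rule det_add_representative_columns[OF r])
  also have "det L = det K"
    unfolding L_def by (rule det_subtract_representative_rows[OF r])
  finally have "det N = det K" .
  have L_outside: "L$i$j = e * ((if j = i then 1 else 0) - (if j = r i then 1 else 0))"
    if "r i \<noteq> i" for i j
    using rows[OF that] that by (simp add: L_def)
  have N_outside: "N$i$j = (if j = i then e else 0)" if i: "i \<notin> ?R" for i j
  proof -
    have "(\<Sum>k | r k \<noteq> k \<and> r k = j. L$i$k) = (\<Sum>k | r k \<noteq> k \<and> r k = j. if k = i then e else 0)"
      using i r by (intro sum.cong refl) (auto simp: L_outside)
    also have "\<dots> = (if r i = j then e else 0)"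
      using i by (simp add: sum.delta' conj_commute)
    finally show ?thesis
      using i r by (auto simp: N_def L_outside)
  qed
  have N_inside: "N$i$j = (\<Sum>k | r k = j. K$i$k)" if "i \<in> ?R" "j \<in> ?R" for i j
  proof -
    have "{k. r k = j} = insert j {k. r k \<noteq> k \<and> r k = j}"
      using that by auto
    then have "(\<Sum>k | r k = j. K$i$k) = K$i$j + (\<Sum>k | r k \<noteq> k \<and> r k = j. K$i$k)"
      using that by simp
    then show ?thesis
      using that by (simp add: N_def L_def)
  qed
  have "det K = (\<Prod>i\<in>-?R. e) *
      (\<Sum>\<sigma> | \<sigma> permutes ?R. of_int (sign \<sigma>) * (\<Prod>i\<in>?R. N$i$\<sigma> i))"
    unfolding \<open>det N = det K\<close>[symmetric] by (rule det_diagonal_rows_outside) (rule N_outside)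
  also have "(\<Prod>i\<in>-?R. e) = e ^ card {i. r i \<noteq> i}"
    by (simp add: Compl_eq)
  also have "(\<Sum>\<sigma> | \<sigma> permutes ?R. of_int (sign \<sigma>) * (\<Prod>i\<in>?R. N$i$\<sigma> i)) =
      (\<Sum>\<sigma> | \<sigma> permutes ?R. of_int (sign \<sigma>) * (\<Prod>i\<in>?R. \<Sum>k | r k = \<sigma> i. K$i$k))"
  proof (rule sum.cong[OF refl])
    fix \<sigma> assume "\<sigma> \<in> {\<sigma>. \<sigma> permutes ?R}"
    then have "\<sigma> i \<in> ?R" if "i \<in> ?R" for i
      using permutes_in_image[of \<sigma> ?R i] that by simp
    then show "of_int (sign \<sigma>) * (\<Prod>i\<in>?R. N$i$\<sigma> i) =
        of_int (sign \<sigma>) * (\<Prod>i\<in>?R. \<Sum>k | r k = \<sigma> i. K$i$k)"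
      by (simp add: N_inside)
  qed
  finally show ?thesis .
qed

lemma det_scalar_plus_factored_rows:
  fixes \<pi> :: "'n::finite \<Rightarrow> 'b::finite" and W :: "'b \<Rightarrow> 'n \<Rightarrow> 'r::comm_ring_1"
  assumes "surj \<pi>"
  shows "det (\<chi> i j. (if i = j then e else 0) + W (\<pi> i) j) =
    e ^ (CARD('n) - CARD('b)) * det (\<chi> s s'. (if s = s' then e else 0) + (\<Sum>j | \<pi> j = s'. W s j))"
proof -
  define rep where "rep s = (SOME i. \<pi> i = s)" for s
  have \<pi>_rep: "\<pi> (rep s) = s" for s
    unfolding rep_def using assms by (metis (mono_tags) someI surj_def)
  define r where "r i = rep (\<pi> i)" for i
  have r_idem: "r (r i) = r i" for i
    by (simp add: r_def \<pi>_rep)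
  have rep_iff: "r k = rep s \<longleftrightarrow> \<pi> k = s" for k s
    by (metis \<pi>_rep r_def)
  have bij: "bij_betw rep UNIV {i. r i = i}"
    by (rule bij_betwI[where g=\<pi>]) (auto simp: r_def \<pi>_rep)
  define K where "K = (\<chi> i j. (if i = j then e else 0) + W (\<pi> i) j)"
  have "det K = e ^ card {i. r i \<noteq> i} *
      (\<Sum>\<sigma> | \<sigma> permutes {i. r i = i}.
         of_int (sign \<sigma>) * (\<Prod>i | r i = i. \<Sum>k | r k = \<sigma> i. K$i$k))"
    by (rule det_fold_representatives[OF r_idem]) (auto simp: K_def r_def \<pi>_rep)
  also have "(\<Sum>\<sigma> | \<sigma> permutes {i. r i = i}.
         of_int (sign \<sigma>) * (\<Prod>i | r i = i. \<Sum>k | r k = \<sigma> i. K$i$k)) =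
      det (\<chi> s s'. \<Sum>k | r k = rep s'. K $ rep s $ k)"
    using det_reindex_bij_betw[OF bij, of "\<lambda>g h. \<Sum>k | r k = h. K$g$k"] by simp
  also have "(\<chi> s s'. \<Sum>k | r k = rep s'. K $ rep s $ k) =
      (\<chi> s s'. (if s = s' then e else 0) + (\<Sum>j | \<pi> j = s'. W s j))"
  proof -
    have "(\<Sum>k | \<pi> k = s'. if rep s = k then e else 0) = (if s = s' then e else 0)" for s s'
      by (simp add: \<pi>_rep)
    then show ?thesis
      by (simp add: K_def rep_iff \<pi>_rep sum.distrib)
  qed
  also have "card {i. r i \<noteq> i} = CARD('n) - CARD('b)"
  proof -
    have "card {i. r i = i} = CARD('b)"
      using bij_betw_same_card[OF bij] by simp
    moreover have "{i. r i \<noteq> i} = UNIV - {i. r i = i}"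
      by auto
    ultimately show ?thesis
      using card_Diff_subset[of "{i. r i = i}" UNIV] by simp
  qed
  finally show ?thesis by (simp add: K_def)
qed

lemma det_scalar_plus_constant:
  "det (\<chi> i j. (if i = j then e else 0) + c :: 'r::comm_ring_1^'n::finite^'n) =
    e ^ (CARD('n) - 1) * (e + of_nat CARD('n) * c)"
proof -
  have "det (\<chi> i j. (if i = j then e else 0) + (\<lambda>_ _. c) ((\<lambda>_. ()) i) j :: 'r^'n^'n) =
      e ^ (CARD('n) - CARD(unit)) *
      det (\<chi> s s'. (if s = s' then e else 0) + (\<Sum>j | (\<lambda>_. ()) j = s'. (\<lambda>_ _. c) s (j::'n)))"
    by (rule det_scalar_plus_factored_rows) auto
  moreover have "{p. p permutes (UNIV::unit set)} = {id}"
    by (auto simp: permutes_id fun_eq_iff)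
  then have "det (A :: 'r^unit^unit) = A$()$()" for A
    by (simp add: det_def UNIV_unit)
  ultimately show ?thesis by simp
qed

section \<open>Block diagonal matrices\<close>

definition blockdiag :: "'r::zero^'u::finite^'u \<Rightarrow> 'r^('u \<times> 'v::finite)^('u \<times> 'v)" where
  "blockdiag Y = (\<chi> i j. if snd i = snd j then Y $ fst i $ fst j else 0)"

definition blockdiag_on :: "'v set \<Rightarrow> 'r::zero_neq_one^'u::finite^'u \<Rightarrow> 'r^('u \<times> 'v::finite)^('u \<times> 'v)" where
  "blockdiag_on T Y =
    (\<chi> i j. if snd i = snd j \<and> snd i \<in> T then Y $ fst i $ fst j else if i = j then 1 else 0)"

lemma det_blockdiag_on_singleton:
  fixes Y :: "'r::comm_ring_1^'u::finite^'u"
  shows "det (blockdiag_on {s} Y :: 'r^('u \<times> 'v::finite)^('u \<times> 'v)) = det Y"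
proof -
  have bij: "bij_betw (\<lambda>a. (a, s)) UNIV {i. snd i = s}"
    by (auto simp: bij_betw_def inj_on_def image_def)
  have diag: "\<And>i j. i \<notin> {i. snd i = s} \<Longrightarrow>
      (blockdiag_on {s} Y :: 'r^('u \<times> 'v)^('u \<times> 'v)) $ i $ j = (if j = i then 1 else 0)"
    by (auto simp: blockdiag_on_def)
  have "det (blockdiag_on {s} Y :: 'r^('u \<times> 'v)^('u \<times> 'v)) =
      det (\<chi> a a'. blockdiag_on {s} Y $ (a, s) $ (a', s))"
    using det_diagonal_rows_outside_reindex[OF diag bij] by simp
  also have "(\<chi> a a'. blockdiag_on {s} Y $ (a, s) $ (a', s)) = Y"
    by (simp add: blockdiag_on_def vec_eq_iff)
  finally show ?thesis .
qed

lemma blockdiag_on_insert: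
  fixes Y :: "'r::comm_ring_1^'u::finite^'u"
  assumes "s \<notin> T"
  shows "(blockdiag_on (insert s T) Y :: 'r^('u \<times> 'v::finite)^('u \<times> 'v)) =
    blockdiag_on {s} Y ** blockdiag_on T Y"
proof -
  have "(blockdiag_on {s} Y ** blockdiag_on T Y) $ i $ j = blockdiag_on (insert s T) Y $ i $ j"
    for i j :: "'u \<times> 'v"
  proof -
    have "(blockdiag_on {s} Y ** blockdiag_on T Y) $ i $ j =
        (\<Sum>k\<in>UNIV. blockdiag_on {s} Y $ i $ k * blockdiag_on T Y $ k $ j)"
      by (simp add: matrix_matrix_mult_def)
    also have "\<dots> = (\<Sum>k\<in>UNIV. if k = (if snd i = s then j else i) then
        (if snd i = s then (if snd j = s then Y $ fst i $ fst j else 0) else blockdiag_on T Y $ i $ j)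
        else 0)"
      by (intro sum.cong refl) (use assms in \<open>auto simp: blockdiag_on_def\<close>)
    also have "\<dots> = blockdiag_on (insert s T) Y $ i $ j"
      using assms by (auto simp: blockdiag_on_def)
    finally show ?thesis .
  qed
  then show ?thesis
    by (simp add: vec_eq_iff)
qed

lemma det_blockdiag_on:
  fixes Y :: "'r::comm_ring_1^'u::finite^'u"
  assumes "finite T"
  shows "det (blockdiag_on T Y :: 'r^('u \<times> 'v::finite)^('u \<times> 'v)) = det Y ^ card T"
  using assms
proof (induction T rule: finite_induct)
  case empty
  have "(blockdiag_on {} Y :: 'r^('u \<times> 'v)^('u \<times> 'v)) = mat 1"
    by (simp add: blockdiag_on_def mat_def vec_eq_iff)
  then show ?case
    by simp
next
  case (insert s T)
  then show ?case
    by (simp only: blockdiag_on_insert[OF insert.hyps(2)] det_mul det_blockdiag_on_singleton)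
      (simp add: insert.IH insert.hyps)
qed

lemma det_blockdiag:
  fixes Y :: "'r::comm_ring_1^'u::finite^'u"
  shows "det (blockdiag Y :: 'r^('u \<times> 'v::finite)^('u \<times> 'v)) = det Y ^ CARD('v)"
proof -
  have "(blockdiag Y :: 'r^('u \<times> 'v)^('u \<times> 'v)) = blockdiag_on UNIV Y"
    by (simp add: blockdiag_def blockdiag_on_def vec_eq_iff)
  then show ?thesis
    by (simp add: det_blockdiag_on)
qed

lemma blockdiag_mult_scalar_plus:
  fixes Y :: "'r::comm_ring_1^'u::finite^'u" and W :: "'v::finite \<Rightarrow> 'u \<times> 'v \<Rightarrow> 'r"
  assumes rows: "\<And>a. (\<Sum>b\<in>UNIV. Y $ a $ b) = e"
  shows "blockdiag Y ** (\<chi> i j. (if i = j then e else 0) + W (snd i) j) =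
    (\<chi> i. e *s (\<chi> j. blockdiag Y $ i $ j + W (snd i) j))"
proof -
  have "(blockdiag Y ** (\<chi> i j. (if i = j then e else 0) + W (snd i) j)) $ i $ j =
      e * (blockdiag Y $ i $ j + W (snd i) j)" for i j
  proof -
    have "(\<Sum>k\<in>UNIV. blockdiag Y $ i $ k * W (snd k) j) =
        (\<Sum>b\<in>UNIV. \<Sum>s\<in>UNIV. if s = snd i then Y $ fst i $ b * W (snd i) j else 0)"
      unfolding sum.cartesian_product UNIV_Times_UNIV
      by (intro sum.cong refl) (auto simp: blockdiag_def)
    also have "\<dots> = e * W (snd i) j"
      by (simp add: rows flip: sum_distrib_right)
    finally have "(\<Sum>k\<in>UNIV. blockdiag Y $ i $ k * W (snd k) j) = e * W (snd i) j" .
    moreover have "(blockdiag Y ** (\<chi> i j. (if i = j then e else 0) + W (snd i) j)) $ i $ j =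
        (\<Sum>k\<in>UNIV. (if k = j then blockdiag Y $ i $ k * e else 0) + blockdiag Y $ i $ k * W (snd k) j)"
      unfolding matrix_matrix_mult_def by (auto simp: distrib_left intro!: sum.cong)
    ultimately show ?thesis
      by (simp add: sum.distrib algebra_simps)
  qed
  then show ?thesis
    by (simp add: vec_eq_iff)
qed

section \<open>The unit group of a finite field\<close>

typedef (overloaded) ('a::field) units = "{x::'a. x \<noteq> 0}"
  morphisms val Abs_units
  by (rule exI[of _ 1]) simp

setup_lifting type_definition_units

instantiation units :: (field) "{comm_monoid_mult, inverse}"
begin
lift_definition one_units :: "'a units" is 1 by simp
lift_definition times_units :: "'a units \<Rightarrow> 'a units \<Rightarrow> 'a units" is "(*)" by simp
lift_definition inverse_units :: "'a units \<Rightarrow> 'a units" is inverse by simp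
lift_definition divide_units :: "'a units \<Rightarrow> 'a units \<Rightarrow> 'a units" is "(/)" by simp
instance by standard (transfer; simp add: ac_simps)+
end

instance units :: ("{field,finite}") finite
proof
  have "finite (range (val :: 'a units \<Rightarrow> 'a))"
    by simp
  moreover have "inj (val :: 'a units \<Rightarrow> 'a)"
    by (rule injI) (simp add: val_inject)
  ultimately show "finite (UNIV :: 'a units set)"
    by (rule finite_imageD)
qed

lemma val_nonzero [simp]: "val x \<noteq> 0"
  using val[of x] by simp

lemma units_eq_iff: "x = y \<longleftrightarrow> val x = val y"
  by (simp add: val_inject)

lemma val_power: "val (x ^ n) = val x ^ n"
  by (induction n) (simp_all add: one_units.rep_eq times_units.rep_eq)

lemma units_div_mult_cancel [simp]: "(x :: 'a::field units) / y * y = x"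
  by transfer simp

lemma units_mult_div_cancel [simp]: "(x :: 'a::field units) * y / y = x"
  by transfer simp

lemma units_div_self [simp]: "(x :: 'a::field units) / x = 1"
  by transfer simp

lemma units_div_eq_iff: "(x :: 'a::field units) / y = z \<longleftrightarrow> x = z * y"
  by transfer (auto simp: field_simps)

lemma units_eq_div_iff: "(z :: 'a::field units) = x / y \<longleftrightarrow> z * y = x"
  by transfer (auto simp: field_simps)

lemma units_div_mult_commute: "(x :: 'a::field units) / y * z = x * z / y"
  by transfer (simp add: field_simps)

lemma units_div_power: "((x :: 'a::field units) / y) ^ n = x ^ n / y ^ n"
  by (simp add: units_eq_iff val_power divide_units.rep_eq power_divide)

lemma units_div_mult_eq_div_div: "(x :: 'a::field units) / (y * z) = x / z / y"
  by transfer (simp add: field_simps)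

lemma units_div_one [simp]: "(x :: 'a::field units) / 1 = x"
  by transfer simp

lemma units_div_div_cancel [simp]: "(x :: 'a::field units) / (x / y) = y"
  by transfer simp

lemma card_units: "CARD('a::{field,finite} units) = CARD('a) - 1"
proof -
  have "inj (val :: 'a units \<Rightarrow> 'a)"
    by (rule injI) (simp add: val_inject)
  then have "CARD('a units) = card (range (val :: 'a units \<Rightarrow> 'a))"
    by (simp add: card_image)
  also have "range (val :: 'a units \<Rightarrow> 'a) = UNIV - {0}"
    using type_definition.Rep_range[OF type_definition_units] by (simp add: Compl_eq_Diff_UNIV Collect_neg_eq)
  finally show ?thesis
    by simp
qed

lemma units_power_card: "(x :: 'a::{field,finite} units) ^ CARD('a units) = 1"
proof -
  define P where "P = (\<Prod>y\<in>(UNIV::'a units set). y)"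
  have "bij_betw (\<lambda>y. x * y) UNIV (UNIV :: 'a units set)"
    by (rule bij_betwI[where g="\<lambda>y. y / x"]) (simp_all add: mult.commute[of x])
  then have "P = (\<Prod>y\<in>UNIV. x * y)"
    using prod.reindex_bij_betw[of "\<lambda>y. x * y" UNIV UNIV "\<lambda>y. y"] by (simp add: P_def)
  also have "\<dots> = x ^ CARD('a units) * P"
    by (simp add: prod.distrib P_def)
  finally have "x ^ CARD('a units) * P / P = P / P"
    by simp
  then show ?thesis by simp
qed

lemma sum_units_div_reindex: "(\<Sum>k\<in>UNIV. f ((x :: 'a::{field,finite} units) / k)) = (\<Sum>k\<in>UNIV. f k)"
proof -
  have "bij_betw (\<lambda>k. x / k) UNIV (UNIV :: 'a units set)"
    by (rule bij_betwI[where g="\<lambda>k. x / k"]) simp_all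
  then show ?thesis
    using sum.reindex_bij_betw[of "\<lambda>k. x / k" UNIV UNIV f] by simp
qed

definition type_ring :: "'a::field ring" where
  "type_ring = \<lparr>carrier = UNIV, mult = (*), one = 1, zero = 0, add = (+)\<rparr>"

lemma field_type_ring: "field (type_ring :: 'a::field ring)"
proof -
  have "\<exists>y. x + y = 0" and "x \<noteq> 0 \<Longrightarrow> \<exists>y. x * y = 1" for x :: 'a
    by (metis add.right_inverse, metis right_inverse)
  then show ?thesis
    by unfold_locales (auto simp: type_ring_def Units_def algebra_simps)
qed

lemma field_mult_group_cyclic:
  "\<exists>g::'a::{field,finite}. g \<noteq> 0 \<and> (\<forall>x. x \<noteq> 0 \<longrightarrow> (\<exists>i::nat. x = g ^ i))"
proof -
  let ?R = "type_ring :: 'a ring"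
  interpret F: field ?R
    by (rule field_type_ring)
  have pow: "x [^]\<^bsub>?R\<^esub> (i::nat) = x ^ i" for x :: 'a and i
    by (induction i) (simp_all add: type_ring_def mult.commute)
  have "\<exists>a\<in>carrier (mult_of ?R). carrier (mult_of ?R) = {a [^]\<^bsub>?R\<^esub> i |i::nat. i \<in> UNIV}"
    by (rule F.finite_field_mult_group_has_gen) (simp add: type_ring_def)
  then obtain a where "a \<in> carrier (mult_of ?R)"
    and a: "carrier (mult_of ?R) = {a [^]\<^bsub>?R\<^esub> i |i::nat. i \<in> UNIV}"
    by blast
  moreover have "carrier (mult_of ?R) = UNIV - {0}"
    by (simp add: type_ring_def)
  ultimately show ?thesis
    unfolding pow by (intro exI[of _ a]) blast
qed

definition generator :: "'a::{field,finite} units" where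
  "generator = (SOME g. \<forall>x. \<exists>i. x = g ^ i)"

lemma generator_powers: "\<exists>i. x = (generator :: 'a::{field,finite} units) ^ i"
proof -
  obtain g :: 'a where "g \<noteq> 0" and g: "\<forall>x. x \<noteq> 0 \<longrightarrow> (\<exists>i::nat. x = g ^ i)"
    using field_mult_group_cyclic by blast
  have "\<forall>x. \<exists>i. x = Abs_units g ^ i"
  proof
    fix x :: "'a units"
    obtain i where "val x = g ^ i"
      using g val_nonzero by blast
    then have "x = Abs_units g ^ i"
      using \<open>g \<noteq> 0\<close> by (simp add: units_eq_iff val_power Abs_units_inverse)
    then show "\<exists>i. x = Abs_units g ^ i" ..
  qed
  then have "\<forall>x. \<exists>i. x = (generator :: 'a units) ^ i"
    unfolding generator_def by (rule someI)
  then show ?thesis by blast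
qed

lemma units_power_mod_card: "(x :: 'a::{field,finite} units) ^ (i mod CARD('a units)) = x ^ i"
proof -
  have "x ^ i = x ^ (CARD('a units) * (i div CARD('a units)) + i mod CARD('a units))"
    by simp
  also have "\<dots> = (x ^ CARD('a units)) ^ (i div CARD('a units)) * x ^ (i mod CARD('a units))"
    by (simp only: power_add power_mult)
  finally have "x ^ i = (x ^ CARD('a units)) ^ (i div CARD('a units)) * x ^ (i mod CARD('a units))" .
  then show ?thesis by (simp add: units_power_card)
qed

lemma generator_power_eq_iff:
  "(generator :: 'a::{field,finite} units) ^ i = generator ^ j \<longleftrightarrow> [i = j] (mod CARD('a units))"
proof -
  let ?n = "CARD('a units)" and ?g = "generator :: 'a units"
  have "x \<in> (\<lambda>i. ?g ^ i) ` {..<?n}" for x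
  proof -
    obtain i where "x = ?g ^ i"
      using generator_powers by blast
    then have "x = ?g ^ (i mod ?n)"
      by (simp add: units_power_mod_card)
    then show ?thesis by simp
  qed
  then have "(\<lambda>i. ?g ^ i) ` {..<?n} = UNIV"
    by blast
  then have "inj_on (\<lambda>i. ?g ^ i) {..<?n}"
    by (intro eq_card_imp_inj_on) simp_all
  then have "?g ^ (i mod ?n) = ?g ^ (j mod ?n) \<longleftrightarrow> i mod ?n = j mod ?n"
    by (auto simp: inj_on_def)
  then show ?thesis
    by (simp add: units_power_mod_card cong_def)
qed

lemma bij_betw_generator_powers:
  "bij_betw (\<lambda>i. (generator :: 'a::{field,finite} units) ^ (r + i)) {..<CARD('a units)} UNIV"
proof -
  let ?n = "CARD('a units)" and ?f = "\<lambda>i. (generator :: 'a units) ^ (r + i)"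
  have "inj_on ?f {..<?n}"
    by (rule inj_onI) (simp add: generator_power_eq_iff cong_add_lcancel_nat cong_less_modulus_unique_nat)
  moreover have "?f ` {..<?n} = UNIV"
    using card_image[OF \<open>inj_on ?f {..<?n}\<close>]
    by (intro card_subset_eq) simp_all
  ultimately show ?thesis
    by (simp add: bij_betw_def)
qed

lemma inj_units_power:
  assumes "coprime a CARD('a::{field,finite} units)"
  shows "inj (\<lambda>x::'a units. x ^ a)"
proof
  fix x y :: "'a units"
  assume eq: "x ^ a = y ^ a"
  obtain i j where x: "x = generator ^ i" and y: "y = generator ^ j"
    using generator_powers by blast
  have "[i * a = j * a] (mod CARD('a units))"
    using eq by (simp add: x y generator_power_eq_iff flip: power_mult)
  then have "[i = j] (mod CARD('a units))"
    using cong_mult_rcancel_nat[OF assms] by blast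
  then show "x = y"
    by (simp add: x y generator_power_eq_iff)
qed

section \<open>Group determinants of the cyclic group of units\<close>

definition group_matrix :: "('a::{field,finite} units \<Rightarrow> 'r) \<Rightarrow> 'r^'a units^'a units" where
  "group_matrix y = (\<chi> x z. y (x / z))"

definition augmentation :: "('a::{field,finite} units \<Rightarrow> 'r::comm_monoid_add) \<Rightarrow> 'r" where
  "augmentation y = (\<Sum>x\<in>UNIV. y x)"

definition group_conv ::
  "('a::{field,finite} units \<Rightarrow> 'r::semiring_0) \<Rightarrow> ('a units \<Rightarrow> 'r) \<Rightarrow> 'a units \<Rightarrow> 'r" where
  "group_conv y z x = (\<Sum>k\<in>UNIV. y (x / k) * z k)"

lemma group_matrix_mult:
  fixes y z :: "'a::{field,finite} units \<Rightarrow> 'r::comm_ring_1"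
  shows "group_matrix y ** group_matrix z = group_matrix (group_conv y z)"
proof -
  have "(\<Sum>k\<in>UNIV. y (x / k) * z (k / w)) = group_conv y z (x / w)" for x w :: "'a units"
  proof -
    have "bij_betw (\<lambda>m. m * w) UNIV (UNIV :: 'a units set)"
      by (rule bij_betwI[where g="\<lambda>k. k / w"]) simp_all
    then have "(\<Sum>k\<in>UNIV. y (x / k) * z (k / w)) = (\<Sum>m\<in>UNIV. y (x / (m * w)) * z (m * w / w))"
      using sum.reindex_bij_betw[of "\<lambda>m. m * w" UNIV UNIV "\<lambda>k. y (x / k) * z (k / w)"] by simp
    then show ?thesis
      by (simp add: group_conv_def units_div_mult_eq_div_div)
  qed
  then show ?thesis
    by (simp add: group_matrix_def matrix_matrix_mult_def vec_eq_iff)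
qed

text \<open>Multiplying \<open>y\<close> by \<open>e\<close> times the unit element plus the all-ones element,
  where \<open>e\<close> is the augmentation of \<open>y\<close>, gives \<open>e (y + 1)\<close>.\<close>

lemma det_group_matrix_plus_one:
  fixes y :: "'a::{field,finite} units \<Rightarrow> 'r::idom"
  assumes "augmentation y \<noteq> 0"
  shows "augmentation y * det (group_matrix (\<lambda>x. y x + 1)) =
    (augmentation y + of_nat CARD('a units)) * det (group_matrix y)"
proof -
  let ?e = "augmentation y" and ?n = "CARD('a units)"
  define z where "z x = (if x = 1 then ?e else 0) + 1" for x :: "'a units"
  have "group_conv y z x = ?e * (y x + 1)" for x
  proof -
    have "group_conv y z x = (\<Sum>k\<in>UNIV. (if k = 1 then y (x / k) * ?e else 0) + y (x / k))"
      unfolding group_conv_def z_def by (intro sum.cong refl) (simp add: algebra_simps)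
    then show ?thesis
      by (simp add: sum.distrib sum_units_div_reindex augmentation_def algebra_simps)
  qed
  then have "group_conv y z = (\<lambda>x. ?e * (y x + 1))" ..
  then have prod: "det (group_matrix y) * det (group_matrix z) =
      det (group_matrix (\<lambda>x. ?e * (y x + 1)))"
    by (simp add: group_matrix_mult det_mul[symmetric])
  have "group_matrix z = (\<chi> i j. (if i = j then ?e else 0) + 1)"
    by (simp add: group_matrix_def z_def vec_eq_iff units_div_eq_iff)
  then have det_z: "det (group_matrix z) = ?e ^ (?n - 1) * (?e + of_nat ?n)"
    using det_scalar_plus_constant[of ?e 1] by simp
  have "group_matrix (\<lambda>x. ?e * (y x + 1)) = (\<chi> i. ?e *s (group_matrix (\<lambda>x. y x + 1) $ i))"
    by (simp add: group_matrix_def vec_eq_iff)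
  then have det_scaled: "det (group_matrix (\<lambda>x. ?e * (y x + 1))) =
      ?e ^ (?n - 1) * (?e * det (group_matrix (\<lambda>x. y x + 1)))"
    using det_rows_mul[of "\<lambda>_. ?e" "\<lambda>i. group_matrix (\<lambda>x. y x + 1) $ i"]
    by (simp add: mult.assoc flip: power_Suc2)
  from prod det_z det_scaled assms show ?thesis
    by (simp add: ac_simps)
qed

lemma sum_lessThan_add_nat:
  fixes a b :: nat
  shows "(\<Sum>m<a + b. f m) = (\<Sum>m<a. f m) + (\<Sum>i<b. f (a + i) :: 'r::comm_monoid_add)"
  by (induction b) (simp_all add: add.assoc)

lemma sum_lessThan_mult_nat:
  fixes a b :: nat
  shows "(\<Sum>m<a * b. f m) = (\<Sum>i<a. \<Sum>j<b. f (i + a * j) :: 'r::comm_monoid_add)"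
proof (induction b)
  case (Suc b)
  have "(\<Sum>m<a * Suc b. f m) = (\<Sum>m<a * b + a. f m)"
    by (simp add: add.commute)
  also have "\<dots> = (\<Sum>m<a * b. f m) + (\<Sum>i<a. f (i + a * b))"
    by (simp only: sum_lessThan_add_nat) (simp add: add.commute)
  finally have "(\<Sum>m<a * Suc b. f m) = (\<Sum>m<a * b. f m) + (\<Sum>i<a. f (i + a * b))" .
  then show ?case
    by (simp add: Suc sum.distrib add.commute)
qed simp

definition geom_sum :: "'a::{field,finite} units \<Rightarrow> nat \<Rightarrow> 'a units \<Rightarrow> int" where
  "geom_sum d r x = (\<Sum>i<r. if d ^ i = x then 1 else 0)"

lemma augmentation_geom_sum: "augmentation (geom_sum d r) = int r"
  unfolding augmentation_def geom_sum_def by (subst sum.swap) simp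

lemma group_matrix_geom_sum_1: "group_matrix (geom_sum d 1) = mat 1"
  by (simp add: group_matrix_def geom_sum_def mat_def vec_eq_iff eq_commute[of 1] units_div_eq_iff)

lemma group_conv_geom_sum: "group_conv (geom_sum d a) (geom_sum (d ^ a) b) = geom_sum d (a * b)"
proof
  fix x
  have delta: "(\<Sum>k\<in>UNIV. (if d ^ i = x / k then 1 else 0) * (if (d ^ a) ^ j = k then 1 else 0)) =
      (if d ^ (i + a * j) = x then 1 else (0::int))" for i j
  proof -
    have "(\<Sum>k\<in>UNIV. (if d ^ i = x / k then 1 else 0) * (if (d ^ a) ^ j = k then 1 else (0::int))) =
        (\<Sum>k\<in>UNIV. if k = (d ^ a) ^ j then (if d ^ i = x / k then 1 else 0) else 0)"
      by (intro sum.cong refl) auto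
    also have "\<dots> = (if d ^ i = x / (d ^ a) ^ j then 1 else 0)"
      by simp
    finally show ?thesis
      by (simp add: units_eq_div_iff power_add power_mult)
  qed
  have "group_conv (geom_sum d a) (geom_sum (d ^ a) b) x =
      (\<Sum>i<a. \<Sum>j<b. \<Sum>k\<in>UNIV. (if d ^ i = x / k then 1 else 0) * (if (d ^ a) ^ j = k then 1 else 0))"
    unfolding group_conv_def geom_sum_def by (simp add: sum_product sum.swap[of _ UNIV])
  also have "\<dots> = (\<Sum>i<a. \<Sum>j<b. if d ^ (i + a * j) = x then 1 else 0)"
    by (simp add: delta)
  also have "\<dots> = geom_sum d (a * b) x"
    unfolding geom_sum_def by (rule sum_lessThan_mult_nat[symmetric])
  finally show "group_conv (geom_sum d a) (geom_sum (d ^ a) b) x = geom_sum d (a * b) x" .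
qed

lemma geom_sum_add_card:
  "geom_sum (generator :: 'a::{field,finite} units) (r + CARD('a units)) x = geom_sum generator r x + 1"
  using sum.reindex_bij_betw[OF bij_betw_generator_powers[of r], of "\<lambda>y. if y = x then 1 else (0::int)"]
  by (simp add: geom_sum_def sum_lessThan_add_nat)

lemma det_group_matrix_comp_power:
  assumes "coprime a CARD('a::{field,finite} units)"
  shows "det (group_matrix (\<lambda>x::'a units. y (x ^ a))) = det (group_matrix y)"
proof -
  have "group_matrix (\<lambda>x. y (x ^ a)) = (\<chi> i j. group_matrix y $ (i ^ a) $ (j ^ a))"
    by (simp add: group_matrix_def units_div_power)
  moreover have "(\<lambda>x::'a units. x ^ a) permutes UNIV"
    using inj_units_power[OF assms]
    by (intro bij_imp_permutes) (simp_all add: bij_betw_def finite_UNIV_inj_surj)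
  ultimately show ?thesis
    by (simp add: det_permute_rows_columns)
qed

lemma geom_sum_power:
  fixes d x :: "'a::{field,finite} units"
  assumes "inj (\<lambda>x::'a units. x ^ a)"
  shows "geom_sum (d ^ a) b (x ^ a) = geom_sum d b x"
proof -
  have "(d ^ a) ^ i = (d ^ i) ^ a" for i
    by (simp add: mult.commute flip: power_mult)
  then have "(d ^ a) ^ i = x ^ a \<longleftrightarrow> d ^ i = x" for i
    using inj_eq[OF assms, of "d ^ i" x] by simp
  then show ?thesis
    by (simp add: geom_sum_def)
qed

lemma det_geom_sum_power:
  assumes "coprime r CARD('a::{field,finite} units)"
  shows "det (group_matrix (geom_sum (generator :: 'a units) (r ^ m))) =
    det (group_matrix (geom_sum (generator :: 'a units) r)) ^ m"
proof (induction m)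
  case 0
  then show ?case
    using group_matrix_geom_sum_1[of "generator :: 'a units"] by simp
next
  case (Suc m)
  let ?g = "generator :: 'a units"
  have "det (group_matrix (geom_sum (?g ^ r) (r ^ m))) = det (group_matrix (geom_sum ?g (r ^ m)))"
    using det_group_matrix_comp_power[OF assms, of "geom_sum (?g ^ r) (r ^ m)"]
    by (simp add: geom_sum_power[OF inj_units_power[OF assms]])
  moreover have "group_matrix (geom_sum ?g (r ^ Suc m)) =
      group_matrix (geom_sum ?g r) ** group_matrix (geom_sum (?g ^ r) (r ^ m))"
    by (simp add: group_matrix_mult group_conv_geom_sum)
  ultimately show ?case
    by (simp add: det_mul Suc.IH)
qed

lemma det_geom_sum_1_mod_card:
  "det (group_matrix (geom_sum (generator :: 'a::{field,finite} units) (1 + k * CARD('a units)))) =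
    int (1 + k * CARD('a units))"
proof (induction k)
  case 0
  then show ?case
    using group_matrix_geom_sum_1[of "generator :: 'a units"] by simp
next
  case (Suc k)
  let ?g = "generator :: 'a units" and ?n = "CARD('a units)"
  let ?r = "1 + k * ?n"
  have "geom_sum ?g (?r + ?n) = (\<lambda>x. geom_sum ?g ?r x + 1)"
    by (rule ext) (rule geom_sum_add_card)
  then have "int ?r * det (group_matrix (geom_sum ?g (?r + ?n))) = int ?r * (int ?r + int ?n)"
    using det_group_matrix_plus_one[of "geom_sum ?g ?r"] Suc.IH
    by (simp only: augmentation_geom_sum) (simp add: mult.commute)
  moreover have "int ?r \<noteq> 0"
    by (simp only: of_nat_eq_0_iff)
  ultimately have "det (group_matrix (geom_sum ?g (?r + ?n))) = int (?r + ?n)"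
    by simp
  moreover have "1 + Suc k * ?n = ?r + ?n"
    by simp
  ultimately show ?case
    by (simp only:)
qed

lemma abs_det_geom_sum:
  assumes "coprime r CARD('a::{field,finite} units)" and "r > 0"
  shows "\<bar>det (group_matrix (geom_sum (generator :: 'a units) r))\<bar> = int r"
proof -
  let ?n = "CARD('a units)" and ?f = "totient CARD('a units)"
  have "[r ^ ?f = 1] (mod ?n)"
    by (rule euler_theorem[OF assms(1)])
  moreover have "r ^ ?f \<ge> 1"
    using assms(2) by simp
  ultimately obtain k where k: "r ^ ?f = 1 + k * ?n"
    by (metis cong_altdef_nat dvdE le_add_diff_inverse mult.commute)
  then have "int r ^ ?f = int (1 + k * ?n)"
    by (metis of_nat_power)
  then have "det (group_matrix (geom_sum (generator :: 'a units) r)) ^ ?f = int r ^ ?f"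
    using det_geom_sum_power[OF assms(1), of ?f] det_geom_sum_1_mod_card[of k, where 'a='a]
    by (simp add: k)
  then have "\<bar>det (group_matrix (geom_sum (generator :: 'a units) r))\<bar> ^ ?f = int r ^ ?f"
    by (metis power_abs abs_of_nat)
  then show ?thesis
    by (rule power_eq_imp_eq_base) simp_all
qed

lemma sign_mult_generator:
  "sign (\<lambda>x. x * (generator :: 'a::{field,finite} units)) = (-1) ^ (CARD('a units) - 1)"
proof -
  let ?g = "generator :: 'a units" and ?n = "CARD('a units)"
  let ?L = "map (\<lambda>i. ?g ^ i) [0..<?n]"
  have bij: "bij_betw (\<lambda>i. ?g ^ i) {..<?n} UNIV"
    using bij_betw_generator_powers[of 0] by simp
  then have "distinct ?L"
    by (simp add: distinct_map atLeast0LessThan bij_betw_def)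
  have "x * ?g = cycle_of_list ?L x" for x
  proof -
    obtain k where k: "k < ?n" "x = ?g ^ k"
      using bij by (metis bij_betw_iff_bijections lessThan_iff UNIV_I)
    have "map (cycle_of_list ?L) ?L = rotate1 ?L"
      using cyclic_rotation[OF \<open>distinct ?L\<close>, of 1] by simp
    then have "cycle_of_list ?L (?L ! k) = rotate1 ?L ! k"
      using k by (metis length_map length_upt minus_nat.diff_0 nth_map)
    also have "\<dots> = ?g ^ (Suc k mod ?n)"
      using k by (simp add: nth_rotate1)
    also have "\<dots> = ?g ^ Suc k"
      by (rule units_power_mod_card)
    finally show ?thesis
      using k by (simp add: mult.commute)
  qed
  then have "(\<lambda>x. x * ?g) = cycle_of_list ?L" ..
  moreover have "?L \<noteq> []"
    by simp
  ultimately show ?thesis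
    using sign_cycle_of_list[OF \<open>distinct ?L\<close>] by simp
qed

lemma group_matrix_det_negation:
  fixes y :: "'a::{field,finite} units \<Rightarrow> int"
  obtains y' :: "'a units \<Rightarrow> int" where "det (group_matrix y') = - det (group_matrix y)"
    and "\<bar>augmentation y'\<bar> = \<bar>augmentation y\<bar>"
proof (cases "even CARD('a units)")
  case True
  let ?g = "generator :: 'a units"
  have "(\<lambda>x. x * ?g) permutes UNIV"
    by (rule bij_imp_permutes) (auto intro!: bij_betwI[where g="\<lambda>x. x / ?g"])
  moreover have "group_matrix (\<lambda>x. y (x * ?g)) = (\<chi> i. group_matrix y $ (i * ?g))"
    by (simp add: group_matrix_def vec_eq_iff units_div_mult_commute)
  ultimately have "det (group_matrix (\<lambda>x. y (x * ?g))) = - det (group_matrix y)"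
    using True det_permute_rows[of "\<lambda>x. x * ?g" "group_matrix y"]
    by (simp add: sign_mult_generator)
  moreover have "augmentation (\<lambda>x. y (x * ?g)) = augmentation y"
    unfolding augmentation_def
    by (rule sum.reindex_bij_betw) (auto intro!: bij_betwI[where g="\<lambda>x. x / ?g"])
  ultimately show ?thesis
    using that[of "\<lambda>x. y (x * ?g)"] by simp
next
  case False
  have "group_matrix (\<lambda>x. - y x) = (\<chi> i. (-1) *s group_matrix y $ i)"
    by (simp add: group_matrix_def vec_eq_iff)
  then have "det (group_matrix (\<lambda>x. - y x)) = - det (group_matrix y)"
    using False det_rows_mul[of "\<lambda>_. -1" "\<lambda>i. group_matrix y $ i"] by simp
  moreover have "augmentation (\<lambda>x. - y x) = - augmentation y"
    by (simp add: augmentation_def sum_negf)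
  ultimately show ?thesis
    using that[of "\<lambda>x. - y x"] by simp
qed

lemma exists_group_matrix_det:
  fixes A :: int
  assumes "A \<noteq> 0" and "coprime (nat \<bar>A\<bar>) CARD('a::{field,finite} units)"
  obtains y :: "'a::{field,finite} units \<Rightarrow> int"
    where "det (group_matrix y) = A" and "\<bar>augmentation y\<bar> = \<bar>A\<bar>"
proof -
  let ?y = "geom_sum (generator :: 'a units) (nat \<bar>A\<bar>)"
  have det: "\<bar>det (group_matrix ?y)\<bar> = \<bar>A\<bar>"
    using abs_det_geom_sum[OF assms(2)] assms(1) by simp
  have aug: "\<bar>augmentation ?y\<bar> = \<bar>A\<bar>"
    by (simp add: augmentation_geom_sum)
  show thesis
  proof (cases "det (group_matrix ?y) = A")
    case True
    show thesis
      using True aug by (rule that)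
  next
    case False
    with det have "det (group_matrix ?y) = - A"
      by (simp add: abs_eq_iff)
    obtain y' :: "'a units \<Rightarrow> int" where "det (group_matrix y') = - det (group_matrix ?y)"
      and "\<bar>augmentation y'\<bar> = \<bar>augmentation ?y\<bar>"
      by (rule group_matrix_det_negation[of ?y])
    with \<open>det (group_matrix ?y) = - A\<close> aug
    have "det (group_matrix y') = A" and "\<bar>augmentation y'\<bar> = \<bar>A\<bar>"
      by simp_all
    then show thesis
      by (rule that)
  qed
qed

section \<open>Group determinants of GA(1, q)\<close>

text \<open>Coordinates in which \<open>g h\<^sup>-\<^sup>1\<close> becomes \<open>(u / c, u (s - s'))\<close> for
  \<open>g = (u, s)\<close> and \<open>h = (c, s')\<close>.\<close>

definition ga_coords :: "'a::field units \<times> 'a \<Rightarrow> 'a \<times> 'a" where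
  "ga_coords i = (val (fst i), val (fst i) * snd i)"

lemma bij_betw_ga_coords: "bij_betw (ga_coords :: 'a::field units \<times> 'a \<Rightarrow> _) UNIV GA1"
proof (rule bij_betwI[where g="\<lambda>g. (Abs_units (fst g), snd g / fst g)"])
  show "ga_coords \<in> UNIV \<rightarrow> (GA1 :: ('a \<times> 'a) set)"
    by (auto simp: ga_coords_def GA1_def)
  show "(\<lambda>g. (Abs_units (fst g), snd g / fst g)) \<in> GA1 \<rightarrow> (UNIV :: ('a units \<times> 'a) set)"
    by simp
  show "(Abs_units (fst (ga_coords i)), snd (ga_coords i) / fst (ga_coords i)) = i" for i :: "'a units \<times> 'a"
    by (simp add: ga_coords_def val_inverse prod_eq_iff)
  show "ga_coords (Abs_units (fst g), snd g / fst g) = g" if "g \<in> (GA1 :: ('a \<times> 'a) set)" for g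
    using that by (cases g) (simp add: ga_coords_def GA1_def Abs_units_inverse)
qed

lemma group_det_GA1_eq_det:
  fixes a :: "'a::{field,finite} \<times> 'a \<Rightarrow> int"
  shows "group_det GA1 ga_mult ga_inv a = det (\<chi> i j. a (ga_mult (ga_coords i) (ga_inv (ga_coords j))))"
  unfolding group_det_def
  using det_reindex_bij_betw[OF bij_betw_ga_coords, of "\<lambda>g h. a (ga_mult g (ga_inv h))"] by simp

lemma group_det_zero:
  assumes "finite G" and "G \<noteq> {}"
  shows "group_det G gm gi (\<lambda>_. 0) = 0"
  using assms by (simp add: group_det_def power_0_left card_eq_0_iff)

text \<open>The coefficients of \<open>y + t (\<Sum>\<^sub>a (a, 0) - \<Sum>\<^sub>a (a, a))\<close>, where \<open>y\<close> lives on the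
  diagonal subgroup \<open>{(a, 0)}\<close>; in the coordinates above they split into the block
  diagonal part \<open>y\<close> and the following correction.\<close>

definition ga_coeff :: "('a::field units \<Rightarrow> int) \<Rightarrow> int \<Rightarrow> 'a \<times> 'a \<Rightarrow> int" where
  "ga_coeff y t g =
    (if snd g = 0 \<and> fst g \<noteq> 0 then y (Abs_units (fst g)) + t else 0) - (if snd g = fst g then t else 0)"

definition ga_correction :: "int \<Rightarrow> 'a::field \<Rightarrow> 'a units \<times> 'a \<Rightarrow> int" where
  "ga_correction t s j =
    t * ((if s = snd j then 1 else 0) - (if s - snd j = inverse (val (fst j)) then 1 else 0))"

lemma ga_coeff_coords:
  "ga_coeff y t (ga_mult (ga_coords i) (ga_inv (ga_coords j))) =
    blockdiag (group_matrix y) $ i $ j + ga_correction t (snd i) j"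
proof -
  obtain u s c s' where i: "i = (u, s)" and j: "j = (c, s')"
    by fastforce
  have "ga_mult (ga_coords i) (ga_inv (ga_coords j)) = (val u / val c, val u * (s - s'))"
    by (simp add: i j ga_coords_def ga_mult_def ga_inv_def field_simps)
  moreover have "Abs_units (val u / val c) = u / c"
    by (metis divide_units.rep_eq val_inverse)
  moreover have "val u * (s - s') = val u / val c \<longleftrightarrow> s - s' = inverse (val c)"
    by (simp add: divide_inverse)
  ultimately show ?thesis
    by (auto simp: i j ga_coeff_def ga_correction_def blockdiag_def group_matrix_def)
qed

lemma sum_inverse_val_indicator:
  "(\<Sum>c\<in>(UNIV :: 'a::{field,finite} units set). if s - s' = inverse (val c) then 1 else (0::int)) =
    (if s = s' then 0 else 1)"
proof (cases "s = s'")
  case False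
  let ?c = "Abs_units (inverse (s - s')) :: 'a units"
  have "s - s' = inverse (val c) \<longleftrightarrow> c = ?c" for c
    using False by (auto simp: units_eq_iff Abs_units_inverse)
  then show ?thesis
    using False by simp
qed simp

lemma det_scalar_plus_ga_correction:
  fixes e t :: int
  defines "q \<equiv> CARD('a::{field,finite})"
  shows "det (\<chi> (i::'a units \<times> 'a) j. (if i = j then e else 0) + ga_correction t (snd i) j) =
    e ^ (CARD('a units \<times> 'a) - q) * ((e + t * int q) ^ (q - 1) * e)"
proof -
  have fibre: "(\<Sum>j | snd j = s'. ga_correction t s (j :: 'a units \<times> 'a)) =
      (if s = s' then t * int q else 0) + (- t)" for s s' :: 'a
  proof -
    have "(\<Sum>j | snd j = s'. ga_correction t s (j :: 'a units \<times> 'a)) =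
        (\<Sum>c\<in>(UNIV :: 'a units set). ga_correction t s (c, s'))"
      by (rule sum.reindex_bij_witness[where i="\<lambda>c. (c, s')" and j=fst]) auto
    also have "\<dots> = t * ((if s = s' then int CARD('a units) else 0) - (if s = s' then 0 else 1))"
      by (simp add: ga_correction_def sum_subtractf flip: sum_distrib_left sum_inverse_val_indicator)
    also have "\<dots> = (if s = s' then t * int q else 0) + (- t)"
      using card_units[where 'a='a] by (simp add: q_def of_nat_diff algebra_simps)
    finally show ?thesis .
  qed
  have "det (\<chi> (i::'a units \<times> 'a) j. (if i = j then e else 0) + ga_correction t (snd i) j) =
      e ^ (CARD('a units \<times> 'a) - q) *
      det (\<chi> s s'. (if s = s' then e else 0) + (\<Sum>j | snd j = s'. ga_correction t s (j :: 'a units \<times> 'a)))"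
    unfolding q_def by (rule det_scalar_plus_factored_rows) (rule surjI[where f="\<lambda>s. (undefined, s)"], simp)
  also have "(\<chi> s s'. (if s = s' then e else 0) + (\<Sum>j | snd j = s'. ga_correction t s (j :: 'a units \<times> 'a))) =
      (\<chi> (s::'a) s'. (if s = s' then e + t * int q else 0) + (- t))"
    by (simp add: fibre vec_eq_iff add.assoc)
  also have "det \<dots> = (e + t * int q) ^ (q - 1) * e"
    using det_scalar_plus_constant[of "e + t * int q" "- t", where 'n='a] by (simp add: q_def)
  finally show ?thesis .
qed

lemma group_det_ga_coeff:
  fixes y :: "'a::{field,finite} units \<Rightarrow> int" and t :: int
  defines "e \<equiv> augmentation y" and "q \<equiv> CARD('a)"
  assumes "e \<noteq> 0"
  shows "e ^ q * group_det GA1 ga_mult ga_inv (ga_coeff y t) =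
    det (group_matrix y) ^ q * ((e + t * int q) ^ (q - 1) * e)"
proof -
  let ?N = "CARD('a units \<times> 'a)"
  define M where "M = (\<chi> i j. ga_coeff y t (ga_mult (ga_coords i) (ga_inv (ga_coords j))))"
  define C where "C = (\<chi> (i::'a units \<times> 'a) j. (if i = j then e else 0) + ga_correction t (snd i) j)"
  have "blockdiag (group_matrix y) ** C =
      (\<chi> i. e *s (\<chi> j. blockdiag (group_matrix y) $ i $ j + ga_correction t (snd i) j))"
    unfolding C_def e_def augmentation_def
    by (rule blockdiag_mult_scalar_plus) (simp add: group_matrix_def sum_units_div_reindex)
  also have "\<dots> = (\<chi> i. e *s M $ i)"
    by (simp add: M_def ga_coeff_coords)
  finally have "det (blockdiag (group_matrix y) ** C) = det (\<chi> i. e *s M $ i)"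
    by simp
  also have "\<dots> = e ^ ?N * det M"
    using det_rows_mul[of "\<lambda>_. e" "\<lambda>i. M $ i"] by simp
  finally have "det (blockdiag (group_matrix y) :: int^('a units \<times> 'a)^('a units \<times> 'a)) *
      (e ^ (?N - q) * ((e + t * int q) ^ (q - 1) * e)) = e ^ ?N * det M"
    by (simp only: det_mul C_def det_scalar_plus_ga_correction q_def)
  moreover have "e ^ ?N = e ^ (?N - q) * e ^ q"
    by (simp add: q_def card_cartesian_product flip: power_add)
  ultimately show ?thesis
    using assms(3) by (simp add: det_blockdiag group_det_GA1_eq_det M_def q_def)
qed

lemma ex_group_det_GA1_eq:
  fixes A B t0 :: int
  assumes "A \<noteq> 0" and "coprime (nat \<bar>A\<bar>) CARD('a::{field,finite} units)"
    and "B = A + int CARD('a) * t0"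
  shows "\<exists>a :: 'a \<times> 'a \<Rightarrow> int. group_det GA1 ga_mult ga_inv a = A * B ^ (CARD('a) - 1)"
proof -
  let ?q = "CARD('a)"
  obtain y :: "'a units \<Rightarrow> int" where det_y: "det (group_matrix y) = A"
    and aug: "\<bar>augmentation y\<bar> = \<bar>A\<bar>"
    by (rule exists_group_matrix_det[OF assms(1,2)])
  define s :: int where "s = (if augmentation y = A then 1 else -1)"
  have "s \<noteq> 0" and e: "augmentation y = s * A"
    using aug by (auto simp: s_def abs_eq_iff)
  have "augmentation y + s * t0 * int ?q = s * B"
    by (simp add: e assms(3) algebra_simps)
  then have "(s * A) ^ ?q * group_det GA1 ga_mult ga_inv (ga_coeff y (s * t0)) =
      A ^ ?q * ((s * B) ^ (?q - 1) * (s * A))"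
    using group_det_ga_coeff[of y "s * t0"] assms(1) \<open>s \<noteq> 0\<close> by (simp add: det_y e)
  also have "\<dots> = (s * A) ^ ?q * (A * B ^ (?q - 1))"
  proof -
    have "s ^ (?q - 1) * s = s ^ ?q"
      by (simp flip: power_Suc2)
    then show ?thesis
      by (simp add: power_mult_distrib algebra_simps)
  qed
  finally have "group_det GA1 ga_mult ga_inv (ga_coeff y (s * t0)) = A * B ^ (?q - 1)"
    using assms(1) \<open>s \<noteq> 0\<close> by simp
  then show ?thesis
    by blast
qed

theorem theorem2:
  fixes p k :: nat and A B :: int
  assumes "prime p" and "k \<ge> 1"
    and "card (UNIV :: 'a::{field,finite} set) = p ^ k"
    and "coprime A (int (p ^ k) - 1)"
    and "[B = A] (mod int (p ^ k))"
  shows "\<exists>a :: 'a \<times> 'a \<Rightarrow> int. group_det GA1 ga_mult ga_inv a = A * B ^ (p ^ k - 1)"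
proof (cases "A = 0")
  case True
  have "(1, 0) \<in> (GA1 :: ('a \<times> 'a) set)"
    by (simp add: GA1_def)
  then show ?thesis
    using True group_det_zero[of "GA1 :: ('a \<times> 'a) set"] by auto
next
  case False
  have "p ^ k \<ge> 1"
    using prime_gt_0_nat[OF assms(1)] by simp
  then have "int CARD('a units) = int (p ^ k) - 1"
    using card_units[where 'a='a] assms(3) by (simp add: of_nat_diff)
  then have "coprime (nat \<bar>A\<bar>) CARD('a units)"
    using assms(4) by simp
  moreover obtain t0 where "B = A + int CARD('a) * t0"
    using assms(3,5) by (metis cong_iff_dvd_diff dvdE add.commute diff_add_cancel)
  ultimately have "\<exists>a :: 'a \<times> 'a \<Rightarrow> int. group_det GA1 ga_mult ga_inv a = A * B ^ (CARD('a) - 1)"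
    by (rule ex_group_det_GA1_eq[OF False])
  then show ?thesis
    using assms(3) by simp
qed

end
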